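(* Let $K\subset\mathbb E$ be a regular cone and $F$ a normal barrier for $K$. The following are equivalent: (1) $F$ has negative curvature; (2) for every $x\in\operatorname{int}K$ and $h\in\mathbb E$, $-\nabla^3F(x)[h,h]\in K^*$; (3) for every $x\in\operatorname{int}K$ and $h\in\mathbb E$ with $x+h\in\operatorname{int}K$, $\nabla^2F(x)h-(\nabla F(x+h)-\nabla F(x))\in K^*$.
   Context: $\mathbb E$ finite-dimensional real space, dual $\mathbb E^*$, pairing $\langle\cdot,\cdot\rangle$. $K$ regular: closed, convex, pointed, nonempty interior; $K^*=\{s\in\mathbb E^*:\langle s,x\rangle\ge0\ \forall x\in K\}$. A normal barrier for $K$ is a self-concordant barrier $F$ on $\operatorname{int}K$ which is logarithmically homogeneous: $F(\tau x)=F(x)-\nu\ln\tau$ for some $\nu$ and all $\tau>0$. $\nabla^3F(x)[h]$ denotes the self-adjoint operator $\mathbb E\to\mathbb E^*$ with $\langle\nabla^3F(x)[h]u,w\rangle=D^3F(x)[h,u,w]$, and $\nabla^3F(x)[h,h]\in\mathbb E^*$ is the vector $u\mapsto D^3F(x)[h,h,u]$. Definition: $F$ has negative curvature if $\nabla^3F(x)[h]\preceq0$ (i.e. $D^3F(x)[h,u,u]\le0$ for all $u\in\mathbb E$) for every $x\in\operatorname{int}K$ and every $h\in K$. *)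

theory Defs
  imports "HOL-Analysis.Analysis"
begin

text \<open>The space E is a finite-dimensional real inner product space ('a :: euclidean_space);
  the dual space E* is identified with E via the inner product, so that the pairing
  <s,x> is s \<bullet> x.\<close>

definition regular_cone :: "'a::euclidean_space set \<Rightarrow> bool" where
  "regular_cone K \<longleftrightarrow> closed K \<and> convex K \<and> cone K \<and> K \<noteq> {} \<and>
     K \<inter> uminus ` K = {0} \<and> interior K \<noteq> {}"

definition dual_cone :: "'a::euclidean_space set \<Rightarrow> 'a set" where
  "dual_cone K = {s. \<forall>x\<in>K. 0 \<le> s \<bullet> x}"

text \<open>g, H, T are the gradient, Hessian and third derivative of F on int K:
  DF(x)[h] = g x \<bullet> h, D2F(x)[h,u] = (H x h) \<bullet> u, D3F(x)[h,u,w] = (T x h u) \<bullet> w.\<close>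

definition C3_on :: "'a::euclidean_space set \<Rightarrow> ('a \<Rightarrow> real) \<Rightarrow> ('a \<Rightarrow> 'a)
     \<Rightarrow> ('a \<Rightarrow> 'a \<Rightarrow>\<^sub>L 'a) \<Rightarrow> ('a \<Rightarrow> 'a \<Rightarrow>\<^sub>L 'a \<Rightarrow>\<^sub>L 'a) \<Rightarrow> bool" where
  "C3_on U F g H T \<longleftrightarrow>
     (\<forall>x\<in>U. (F has_derivative (\<lambda>h. g x \<bullet> h)) (at x)) \<and>
     (\<forall>x\<in>U. (g has_derivative blinfun_apply (H x)) (at x)) \<and>
     (\<forall>x\<in>U. (H has_derivative blinfun_apply (T x)) (at x)) \<and>
     continuous_on U T"

definition D2 :: "('a::euclidean_space \<Rightarrow> 'a \<Rightarrow>\<^sub>L 'a) \<Rightarrow> 'a \<Rightarrow> 'a \<Rightarrow> 'a \<Rightarrow> real" where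
  "D2 H x h u = blinfun_apply (H x) h \<bullet> u"

definition D3 :: "('a::euclidean_space \<Rightarrow> 'a \<Rightarrow>\<^sub>L 'a \<Rightarrow>\<^sub>L 'a) \<Rightarrow> 'a \<Rightarrow> 'a \<Rightarrow> 'a \<Rightarrow> 'a \<Rightarrow> real" where
  "D3 T x h u w = blinfun_apply (blinfun_apply (T x) h) u \<bullet> w"

definition D3vec :: "('a::euclidean_space \<Rightarrow> 'a \<Rightarrow>\<^sub>L 'a \<Rightarrow>\<^sub>L 'a) \<Rightarrow> 'a \<Rightarrow> 'a \<Rightarrow> 'a" where
  "D3vec T x h = blinfun_apply (blinfun_apply (T x) h) h"

definition self_concordant_barrier :: "'a::euclidean_space set \<Rightarrow> real \<Rightarrow> ('a \<Rightarrow> real) \<Rightarrow> ('a \<Rightarrow> 'a)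
     \<Rightarrow> ('a \<Rightarrow> 'a \<Rightarrow>\<^sub>L 'a) \<Rightarrow> ('a \<Rightarrow> 'a \<Rightarrow>\<^sub>L 'a \<Rightarrow>\<^sub>L 'a) \<Rightarrow> bool" where
  "self_concordant_barrier K \<nu> F g H T \<longleftrightarrow>
     C3_on (interior K) F g H T \<and>
     convex_on (interior K) F \<and>
     (\<forall>x\<in>interior K. \<forall>h. \<bar>D3 T x h h h\<bar> \<le> 2 * (D2 H x h h) powr (3/2)) \<and>
     (\<forall>xs y. (\<forall>i. xs i \<in> interior K) \<longrightarrow> xs \<longlonglongrightarrow> y \<longrightarrow> y \<in> frontier K \<longrightarrow>
        filterlim (\<lambda>i. F (xs i)) at_top sequentially) \<and>
     (\<forall>x\<in>interior K. \<forall>h. (g x \<bullet> h)\<^sup>2 \<le> \<nu> * D2 H x h h)"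

definition normal_barrier :: "'a::euclidean_space set \<Rightarrow> real \<Rightarrow> ('a \<Rightarrow> real) \<Rightarrow> ('a \<Rightarrow> 'a)
     \<Rightarrow> ('a \<Rightarrow> 'a \<Rightarrow>\<^sub>L 'a) \<Rightarrow> ('a \<Rightarrow> 'a \<Rightarrow>\<^sub>L 'a \<Rightarrow>\<^sub>L 'a) \<Rightarrow> bool" where
  "normal_barrier K \<nu> F g H T \<longleftrightarrow>
     self_concordant_barrier K \<nu> F g H T \<and>
     (\<forall>x\<in>interior K. \<forall>\<tau>>0. F (\<tau> *\<^sub>R x) = F x - \<nu> * ln \<tau>)"

definition negative_curvature :: "'a::euclidean_space set \<Rightarrow> ('a \<Rightarrow> 'a \<Rightarrow>\<^sub>L 'a \<Rightarrow>\<^sub>L 'a) \<Rightarrow> bool" where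
  "negative_curvature K T \<longleftrightarrow> (\<forall>x\<in>interior K. \<forall>h\<in>K. \<forall>u. D3 T x h u u \<le> 0)"

end

(*
  Schwarz's theorem makes the third derivative symmetric, so for h in K the
  quantity D3F(x)[h,u,u] equals D3F(x)[u,u,h] = <nabla3F(x)[u,u], h>; this gives
  (1) <-> (2).  Symmetry itself comes from the second difference
  f(x+ta+tb) - f(x+ta) - f(x+tb) + f(x) = t^2 D2f(x)[a,b] + o(t^2), which is
  symmetric in a and b.

  For a fixed w in K, condition (3) says that y |-> <nabla F(y), w> lies below its
  tangent planes on int K, and (2) says that its second derivative
  h |-> D3F(x)[h,h,w] is nonpositive.  So (2) -> (3) is the mean value theorem
  along the segment from x to x + h, and (3) -> (2) follows because adding the
  tangent inequalities at x and at x + th shows that t |-> D2F(x + th)[h,w] is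
  nonincreasing.
*)

theory Submission
  imports Defs
begin

lemma has_real_derivative_along_line:
  fixes f :: "'a::real_normed_vector \<Rightarrow> real"
  assumes "(f has_derivative f') (at (x + t *\<^sub>R h))"
  shows "((\<lambda>s. f (x + s *\<^sub>R h)) has_real_derivative f' h) (at t)"
proof -
  have "((\<lambda>s. x + s *\<^sub>R h) has_derivative (\<lambda>s. s *\<^sub>R h)) (at t)"
    by (auto intro!: derivative_eq_intros)
  then have "((\<lambda>s. f (x + s *\<^sub>R h)) has_derivative (\<lambda>s. f' (s *\<^sub>R h))) (at t)"
    using assms by (rule has_derivative_compose)
  moreover have "(\<lambda>s. f' (s *\<^sub>R h)) = (*) (f' h)"
    using has_derivative_linear[OF assms] by (auto simp: fun_eq_iff linear_scale)
  ultimately show ?thesis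
    by (simp add: has_field_derivative_def)
qed

lemma has_derivative_blinfun_apply_left:
  assumes "(H has_derivative blinfun_apply T') F"
  shows "((\<lambda>y. blinfun_apply (H y) c) has_derivative (\<lambda>v. blinfun_apply (T' v) c)) F"
  using bounded_linear.has_derivative[OF blinfun.bounded_linear_left assms] by simp

lemma DERIV_nonpos_if_eventually_right_le:
  fixes \<psi> :: "real \<Rightarrow> real"
  assumes "(\<psi> has_real_derivative l) (at t)" and "\<forall>\<^sub>F s in at_right t. \<psi> s \<le> \<psi> t"
  shows "l \<le> 0"
proof (rule ccontr)
  assume "\<not> l \<le> 0"
  then obtain d where "d > 0" and inc: "\<And>s. 0 < s \<Longrightarrow> s < d \<Longrightarrow> \<psi> t < \<psi> (t + s)"
    using DERIV_pos_inc_right[OF assms(1)] by auto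
  obtain b where "b > t" and le: "\<And>s. t < s \<Longrightarrow> s < b \<Longrightarrow> \<psi> s \<le> \<psi> t"
    using assms(2) by (auto simp: eventually_at_right[of t "t + 1"])
  define s where "s = min d (b - t) / 2"
  have "0 < s" "s < d" "t + s < b"
    using \<open>d > 0\<close> \<open>b > t\<close> unfolding s_def by (auto simp: min_def field_simps)
  then show False
    using inc[of s] le[of "t + s"] by simp
qed

lemma DERIV_second_nonpos_imp_below_tangent:
  fixes \<phi> \<psi> \<psi>' :: "real \<Rightarrow> real"
  assumes "a \<le> b"
    and \<phi>: "\<And>s. a \<le> s \<Longrightarrow> s \<le> b \<Longrightarrow> (\<phi> has_real_derivative \<psi> s) (at s)"
    and \<psi>: "\<And>s. a \<le> s \<Longrightarrow> s \<le> b \<Longrightarrow> (\<psi> has_real_derivative \<psi>' s) (at s)"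
    and \<psi>'_nonpos: "\<And>s. a \<le> s \<Longrightarrow> s \<le> b \<Longrightarrow> \<psi>' s \<le> 0"
  shows "\<phi> b \<le> \<phi> a + (b - a) * \<psi> a"
proof (cases "a = b")
  case False
  with \<open>a \<le> b\<close> have "a < b"
    by simp
  obtain z where z: "a < z" "z < b" and mvt: "\<phi> b - \<phi> a = (b - a) * \<psi> z"
    using MVT2[OF \<open>a < b\<close> \<phi>] by blast
  have "\<psi> z \<le> \<psi> a"
  proof (rule DERIV_nonpos_imp_nonincreasing[of a z \<psi>])
    show "a \<le> z"
      using z by simp
  next
    fix s
    assume "a \<le> s" "s \<le> z"
    then show "\<exists>y. (\<psi> has_real_derivative y) (at s) \<and> y \<le> 0"
      using \<psi> \<psi>'_nonpos z by fastforce
  qed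
  then have "(b - a) * \<psi> z \<le> (b - a) * \<psi> a"
    using \<open>a \<le> b\<close> by (simp add: mult_left_mono)
  then show ?thesis
    using mvt by simp
qed simp

definition second_difference :: "('a::real_vector \<Rightarrow> real) \<Rightarrow> 'a \<Rightarrow> 'a \<Rightarrow> 'a \<Rightarrow> real \<Rightarrow> real" where
  "second_difference f x a b t = f (x + t *\<^sub>R a + t *\<^sub>R b) - f (x + t *\<^sub>R a) - f (x + t *\<^sub>R b) + f x"

lemma second_difference_commute: "second_difference f x a b = second_difference f x b a"
  by (auto simp: fun_eq_iff second_difference_def algebra_simps)

lemma second_difference_estimate:
  fixes f :: "'a::real_inner \<Rightarrow> real"
  assumes df: "\<And>y. y \<in> ball x r \<Longrightarrow> (f has_derivative (\<lambda>v. G y \<bullet> v)) (at y)"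
    and dG: "\<And>y. y \<in> ball x r \<Longrightarrow> norm (G y - G x - L (y - x)) \<le> e * norm (y - x)"
    and "linear L" and "0 \<le> e" and "0 < t" and small: "t * (norm a + norm b) < r"
  shows "\<bar>second_difference f x a b t - t\<^sup>2 * (L a \<bullet> b)\<bar> \<le> 2 * e * t\<^sup>2 * (norm a + norm b)\<^sup>2"
proof -
  define C where "C = norm a + norm b"
  have near_a: "norm (t *\<^sub>R a + s *\<^sub>R b) \<le> t * C" and near: "norm (s *\<^sub>R b) \<le> t * C"
    if "0 \<le> s" "s \<le> t" for s
  proof -
    have "norm (s *\<^sub>R b) \<le> t * norm b" and "norm (t *\<^sub>R a) = t * norm a"
      using that \<open>0 < t\<close> by (simp_all add: mult_right_mono)
    moreover have "0 \<le> t * norm a"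
      using \<open>0 < t\<close> by simp
    ultimately show "norm (t *\<^sub>R a + s *\<^sub>R b) \<le> t * C" "norm (s *\<^sub>R b) \<le> t * C"
      using norm_triangle_ineq[of "t *\<^sub>R a" "s *\<^sub>R b"] unfolding C_def distrib_left by linarith+
  qed
  \<comment> \<open>The second difference is \<open>k t - k 0\<close>; apply the mean value theorem to \<open>k\<close> and
    expand \<open>G\<close> to first order at \<open>x\<close> at the two intermediate points.\<close>
  define k where "k s = f (x + t *\<^sub>R a + s *\<^sub>R b) - f (x + s *\<^sub>R b)" for s
  have k_deriv: "(k has_real_derivative G (x + t *\<^sub>R a + s *\<^sub>R b) \<bullet> b - G (x + s *\<^sub>R b) \<bullet> b) (at s)"
    if "0 \<le> s" "s \<le> t" for s
  proof -
    have "x + u \<in> ball x r" if "norm u < r" for u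
      using that by (simp add: dist_norm)
    then have "x + t *\<^sub>R a + s *\<^sub>R b \<in> ball x r" "x + s *\<^sub>R b \<in> ball x r"
      using near_a[OF that] near[OF that] small unfolding add.assoc C_def by force+
    then show ?thesis
      unfolding k_def by (intro DERIV_diff has_real_derivative_along_line df)
  qed
  obtain z where z: "0 < z" "z < t"
    and "k t - k 0 = t * (G (x + t *\<^sub>R a + z *\<^sub>R b) \<bullet> b - G (x + z *\<^sub>R b) \<bullet> b)"
    using MVT2[OF \<open>0 < t\<close> k_deriv] by auto
  moreover define p q where "p = x + t *\<^sub>R a + z *\<^sub>R b" and "q = x + z *\<^sub>R b"
  ultimately have diff: "second_difference f x a b t - t\<^sup>2 * (L a \<bullet> b) = t * ((G p - G q - t *\<^sub>R L a) \<bullet> b)"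
    by (simp add: second_difference_def k_def algebra_simps inner_diff_left power2_eq_square)
  have p_near: "norm (p - x) \<le> t * C" and q_near: "norm (q - x) \<le> t * C"
    using near_a[of z] near[of z] z by (simp_all add: p_def q_def add.assoc)
  then have "p \<in> ball x r" and "q \<in> ball x r"
    using small by (simp_all add: C_def dist_norm norm_minus_commute[of x])
  have "G p - G q - t *\<^sub>R L a = (G p - G x - L (p - x)) - (G q - G x - L (q - x))"
    using \<open>linear L\<close> by (simp add: p_def q_def linear_add linear_scale algebra_simps)
  then have "norm (G p - G q - t *\<^sub>R L a) \<le> norm (G p - G x - L (p - x)) + norm (G q - G x - L (q - x))"
    by (metis norm_triangle_ineq4)
  also have "\<dots> \<le> e * norm (p - x) + e * norm (q - x)"
    using dG[OF \<open>p \<in> ball x r\<close>] dG[OF \<open>q \<in> ball x r\<close>] by (rule add_mono)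
  also have "\<dots> \<le> e * (t * C) + e * (t * C)"
    using p_near q_near \<open>0 \<le> e\<close> by (intro add_mono mult_left_mono)
  finally have "norm (G p - G q - t *\<^sub>R L a) * norm b \<le> (2 * e * (t * C)) * C"
    using \<open>0 \<le> e\<close> \<open>0 < t\<close> by (intro mult_mono) (auto simp: C_def)
  then have "\<bar>(G p - G q - t *\<^sub>R L a) \<bullet> b\<bar> \<le> 2 * e * (t * C) * C"
    by (rule order_trans[OF Cauchy_Schwarz_ineq2])
  have "\<bar>second_difference f x a b t - t\<^sup>2 * (L a \<bullet> b)\<bar> = t * \<bar>(G p - G q - t *\<^sub>R L a) \<bullet> b\<bar>"
    using \<open>0 < t\<close> by (simp add: diff abs_mult)
  also have "\<dots> \<le> t * (2 * e * (t * C) * C)"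
    using \<open>\<bar>(G p - G q - t *\<^sub>R L a) \<bullet> b\<bar> \<le> 2 * e * (t * C) * C\<close> \<open>0 < t\<close> by (intro mult_left_mono) auto
  also have "\<dots> = 2 * e * t\<^sup>2 * C\<^sup>2"
    by (simp add: power2_eq_square mult_ac)
  finally show ?thesis
    unfolding C_def .
qed

lemma second_difference_eventually_close:
  fixes f :: "'a::real_inner \<Rightarrow> real"
  assumes "open U" and "x \<in> U"
    and df: "\<And>y. y \<in> U \<Longrightarrow> (f has_derivative (\<lambda>v. G y \<bullet> v)) (at y)"
    and dG: "(G has_derivative L) (at x)"
    and "0 < e"
  shows "\<forall>\<^sub>F t in at_right 0.
    \<bar>second_difference f x a b t - t\<^sup>2 * (L a \<bullet> b)\<bar> \<le> 2 * e * t\<^sup>2 * (norm a + norm b)\<^sup>2"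
proof -
  obtain d where "0 < d"
    and d: "\<And>y. norm (y - x) < d \<Longrightarrow> norm (G y - G x - L (y - x)) \<le> e * norm (y - x)"
    using dG \<open>0 < e\<close> unfolding has_derivative_at_alt by blast
  obtain r0 where "0 < r0" and "ball x r0 \<subseteq> U"
    using \<open>open U\<close> \<open>x \<in> U\<close> openE by blast
  define r where "r = min d r0"
  have "0 < r / (norm a + norm b + 1)"
    using \<open>0 < d\<close> \<open>0 < r0\<close> by (simp add: r_def add_nonneg_pos)
  then show ?thesis
  proof (rule eventually_mono[OF eventually_at_right_real])
    fix t
    assume t: "t \<in> {0<..<r / (norm a + norm b + 1)}"
    then have "t * (norm a + norm b) \<le> t * (norm a + norm b + 1)"
      by simp
    also have "\<dots> < r"
      using t by (simp add: pos_less_divide_eq add_nonneg_pos)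
    finally have small: "t * (norm a + norm b) < r" .
    show "\<bar>second_difference f x a b t - t\<^sup>2 * (L a \<bullet> b)\<bar> \<le> 2 * e * t\<^sup>2 * (norm a + norm b)\<^sup>2"
    proof (rule second_difference_estimate[OF _ _ _ _ _ small])
      show "(f has_derivative (\<bullet>) (G y)) (at y)" if "y \<in> ball x r" for y
        using that \<open>ball x r0 \<subseteq> U\<close> by (intro df) (auto simp: r_def)
      show "norm (G y - G x - L (y - x)) \<le> e * norm (y - x)" if "y \<in> ball x r" for y
        using that by (intro d) (auto simp: r_def dist_norm norm_minus_commute)
    qed (use t \<open>0 < e\<close> has_derivative_linear[OF dG] in auto)
  qed
qed

lemma second_difference_tendsto:
  fixes f :: "'a::real_inner \<Rightarrow> real"
  assumes "open U" and "x \<in> U"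
    and "\<And>y. y \<in> U \<Longrightarrow> (f has_derivative (\<lambda>v. G y \<bullet> v)) (at y)"
    and "(G has_derivative L) (at x)"
  shows "((\<lambda>t. second_difference f x a b t / t\<^sup>2) \<longlongrightarrow> L a \<bullet> b) (at_right 0)"
proof (rule tendstoI)
  fix \<epsilon> :: real
  assume "0 < \<epsilon>"
  define C where "C = norm a + norm b"
  define e where "e = \<epsilon> / 4 / (C\<^sup>2 + 1)"
  have "0 < C\<^sup>2 + 1"
    by (simp add: add_nonneg_pos)
  then have "0 < e" and "e * (C\<^sup>2 + 1) = \<epsilon> / 4"
    using \<open>0 < \<epsilon>\<close> by (simp_all add: e_def del: divide_divide_eq_left)
  then have "2 * e * C\<^sup>2 < \<epsilon>"
    using \<open>0 < \<epsilon>\<close> unfolding distrib_left by linarith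
  show "\<forall>\<^sub>F t in at_right 0. dist (second_difference f x a b t / t\<^sup>2) (L a \<bullet> b) < \<epsilon>"
    using second_difference_eventually_close[OF assms \<open>0 < e\<close>, of a b] eventually_at_right_less
  proof (rule eventually_elim2)
    fix t :: real
    assume close: "\<bar>second_difference f x a b t - t\<^sup>2 * (L a \<bullet> b)\<bar> \<le> 2 * e * t\<^sup>2 * (norm a + norm b)\<^sup>2"
      and "0 < t"
    have "dist (second_difference f x a b t / t\<^sup>2) (L a \<bullet> b)
        = \<bar>second_difference f x a b t - t\<^sup>2 * (L a \<bullet> b)\<bar> / t\<^sup>2"
      using \<open>0 < t\<close> by (simp add: dist_real_def field_simps)
    also have "\<dots> \<le> 2 * e * C\<^sup>2"
      using close \<open>0 < t\<close> by (simp add: C_def field_simps)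
    finally show "dist (second_difference f x a b t / t\<^sup>2) (L a \<bullet> b) < \<epsilon>"
      using \<open>2 * e * C\<^sup>2 < \<epsilon>\<close> by simp
  qed
qed

lemma gradient_derivative_symmetric:
  fixes f :: "'a::real_inner \<Rightarrow> real"
  assumes "open U" and "x \<in> U"
    and "\<And>y. y \<in> U \<Longrightarrow> (f has_derivative (\<lambda>v. G y \<bullet> v)) (at y)"
    and "(G has_derivative L) (at x)"
  shows "L a \<bullet> b = L b \<bullet> a"
proof (rule tendsto_unique)
  show "((\<lambda>t. second_difference f x a b t / t\<^sup>2) \<longlongrightarrow> L a \<bullet> b) (at_right 0)"
    using assms by (rule second_difference_tendsto)
  show "((\<lambda>t. second_difference f x a b t / t\<^sup>2) \<longlongrightarrow> L b \<bullet> a) (at_right 0)"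
    using second_difference_tendsto[OF assms, of b a] by (simp add: second_difference_commute)
qed simp

lemma C3_on_D2_symmetric:
  assumes "C3_on U F g H T" and "open U" and "x \<in> U"
  shows "D2 H x a b = D2 H x b a"
  using gradient_derivative_symmetric[OF assms(2,3), of F g] assms(1,3)
  unfolding C3_on_def D2_def by blast

lemma C3_on_D3_symmetric:
  assumes "C3_on U F g H T" and "open U" and "x \<in> U"
  shows "D3 T x a c b = D3 T x b c a"
proof -
  have "((\<lambda>z. g z \<bullet> c) has_derivative (\<lambda>v. blinfun_apply (H y) c \<bullet> v)) (at y)" if "y \<in> U" for y
  proof -
    have "((\<lambda>z. g z \<bullet> c) has_derivative (\<lambda>v. blinfun_apply (H y) v \<bullet> c)) (at y)"
      using assms(1) that unfolding C3_on_def by (auto intro: has_derivative_inner_left)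
    moreover have "(\<lambda>v. blinfun_apply (H y) v \<bullet> c) = (\<lambda>v. blinfun_apply (H y) c \<bullet> v)"
      using C3_on_D2_symmetric[OF assms(1,2) that] by (auto simp: D2_def)
    ultimately show ?thesis
      by simp
  qed
  moreover have "((\<lambda>z. blinfun_apply (H z) c) has_derivative (\<lambda>v. blinfun_apply (T x v) c)) (at x)"
    using assms(1,3) unfolding C3_on_def by (auto intro: has_derivative_blinfun_apply_left)
  ultimately show ?thesis
    unfolding D3_def by (rule gradient_derivative_symmetric[OF assms(2,3)])
qed

lemma negative_curvature_iff_D3vec_dual_cone:
  assumes "\<And>x a b c. x \<in> interior K \<Longrightarrow> D3 T x a c b = D3 T x b c a"
  shows "negative_curvature K T \<longleftrightarrow> (\<forall>x\<in>interior K. \<forall>h. - D3vec T x h \<in> dual_cone K)"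
proof -
  have "- D3vec T x h \<in> dual_cone K \<longleftrightarrow> (\<forall>w\<in>K. D3 T x w h h \<le> 0)" if "x \<in> interior K" for x h
    using assms[OF that, of _ h h] by (simp add: dual_cone_def D3vec_def D3_def)
  then show ?thesis
    unfolding negative_curvature_def by blast
qed

lemma gradient_below_tangent_if_D3vec_nonpos:
  fixes g :: "'a::euclidean_space \<Rightarrow> 'a"
  assumes "convex U" and "x \<in> U" and "x + h \<in> U"
    and dg: "\<And>y. y \<in> U \<Longrightarrow> (g has_derivative blinfun_apply (H y)) (at y)"
    and dH: "\<And>y. y \<in> U \<Longrightarrow> (H has_derivative blinfun_apply (T y)) (at y)"
    and nonpos: "\<And>y. y \<in> U \<Longrightarrow> D3vec T y h \<bullet> w \<le> 0"
  shows "g (x + h) \<bullet> w \<le> g x \<bullet> w + blinfun_apply (H x) h \<bullet> w"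
proof -
  have seg: "x + s *\<^sub>R h \<in> U" if "0 \<le> s" "s \<le> 1" for s
    using convexD[OF \<open>convex U\<close> \<open>x \<in> U\<close> \<open>x + h \<in> U\<close>, of "1 - s" s] that
    by (simp add: algebra_simps)
  have "g (x + 1 *\<^sub>R h) \<bullet> w \<le> g (x + 0 *\<^sub>R h) \<bullet> w + (1 - 0) * (blinfun_apply (H (x + 0 *\<^sub>R h)) h \<bullet> w)"
  proof (rule DERIV_second_nonpos_imp_below_tangent)
    fix s :: real
    assume "0 \<le> s" "s \<le> 1"
    note y = seg[OF this]
    show "((\<lambda>s. g (x + s *\<^sub>R h) \<bullet> w) has_real_derivative blinfun_apply (H (x + s *\<^sub>R h)) h \<bullet> w) (at s)"
      by (rule has_real_derivative_along_line[OF has_derivative_inner_left[OF dg[OF y]]])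
    show "((\<lambda>s. blinfun_apply (H (x + s *\<^sub>R h)) h \<bullet> w) has_real_derivative D3vec T (x + s *\<^sub>R h) h \<bullet> w) (at s)"
      unfolding D3vec_def
      by (rule has_real_derivative_along_line[OF has_derivative_inner_left[OF has_derivative_blinfun_apply_left[OF dH[OF y]]]])
    show "D3vec T (x + s *\<^sub>R h) h \<bullet> w \<le> 0"
      using nonpos[OF y] .
  qed simp
  then show ?thesis
    by simp
qed

lemma D3vec_nonpos_if_gradient_below_tangent:
  fixes g :: "'a::euclidean_space \<Rightarrow> 'a"
  assumes "open U" and "x \<in> U"
    and dH: "\<And>y. y \<in> U \<Longrightarrow> (H has_derivative blinfun_apply (T y)) (at y)"
    and below: "\<And>y k. y \<in> U \<Longrightarrow> y + k \<in> U \<Longrightarrow> g (y + k) \<bullet> w \<le> g y \<bullet> w + blinfun_apply (H y) k \<bullet> w"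
  shows "D3vec T x h \<bullet> w \<le> 0"
proof -
  \<comment> \<open>Adding the tangent bounds at \<open>y\<close> and at \<open>y + k\<close> eliminates \<open>g\<close>.\<close>
  have mono: "blinfun_apply (H (y + k)) k \<bullet> w \<le> blinfun_apply (H y) k \<bullet> w" if "y \<in> U" "y + k \<in> U" for y k
    using below[OF that] below[of "y + k" "- k"] that by (simp add: blinfun.minus_right)
  define \<psi> where "\<psi> s = blinfun_apply (H (x + s *\<^sub>R h)) h \<bullet> w" for s
  have "(\<psi> has_real_derivative D3vec T x h \<bullet> w) (at 0)"
    using has_real_derivative_along_line[OF has_derivative_inner_left[OF has_derivative_blinfun_apply_left[OF dH]], of x 0 h]
      \<open>x \<in> U\<close> unfolding \<psi>_def D3vec_def by simp
  moreover have "\<forall>\<^sub>F s in at_right 0. \<psi> s \<le> \<psi> 0"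
  proof -
    have "((\<lambda>s. x + s *\<^sub>R h) \<longlongrightarrow> x + 0 *\<^sub>R h) (at_right 0)"
      by (intro tendsto_intros)
    then have "\<forall>\<^sub>F s in at_right 0. x + s *\<^sub>R h \<in> U"
      using \<open>open U\<close> \<open>x \<in> U\<close> by (simp add: topological_tendstoD)
    then show ?thesis
    proof (rule eventually_mono[OF eventually_conj[OF _ eventually_at_right_less]])
      fix s :: real
      assume "x + s *\<^sub>R h \<in> U \<and> 0 < s"
      then have "s * \<psi> s \<le> s * \<psi> 0"
        using mono[OF \<open>x \<in> U\<close>, of "s *\<^sub>R h"] by (simp add: \<psi>_def blinfun.scaleR_right)
      then show "\<psi> s \<le> \<psi> 0"
        using \<open>x + s *\<^sub>R h \<in> U \<and> 0 < s\<close> by simp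
    qed
  qed
  ultimately show ?thesis
    by (rule DERIV_nonpos_if_eventually_right_le)
qed

lemma D3vec_dual_cone_iff_gradient_increment_dual_cone:
  fixes g :: "'a::euclidean_space \<Rightarrow> 'a"
  assumes "open U" and "convex U"
    and dg: "\<And>y. y \<in> U \<Longrightarrow> (g has_derivative blinfun_apply (H y)) (at y)"
    and dH: "\<And>y. y \<in> U \<Longrightarrow> (H has_derivative blinfun_apply (T y)) (at y)"
  shows "(\<forall>x\<in>U. \<forall>h. - D3vec T x h \<in> dual_cone K) \<longleftrightarrow>
    (\<forall>x\<in>U. \<forall>h. x + h \<in> U \<longrightarrow> blinfun_apply (H x) h - (g (x + h) - g x) \<in> dual_cone K)"
proof -
  have concave_iff: "(\<forall>x\<in>U. \<forall>h. D3vec T x h \<bullet> w \<le> 0) \<longleftrightarrow>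
      (\<forall>x\<in>U. \<forall>h. x + h \<in> U \<longrightarrow> g (x + h) \<bullet> w \<le> g x \<bullet> w + blinfun_apply (H x) h \<bullet> w)" for w
    using gradient_below_tangent_if_D3vec_nonpos[OF \<open>convex U\<close> _ _ dg dH]
      D3vec_nonpos_if_gradient_below_tangent[OF \<open>open U\<close> _ dH] by blast
  have "(\<forall>x\<in>U. \<forall>h. - D3vec T x h \<in> dual_cone K) \<longleftrightarrow> (\<forall>w\<in>K. \<forall>x\<in>U. \<forall>h. D3vec T x h \<bullet> w \<le> 0)"
    by (auto simp: dual_cone_def)
  also have "\<dots> \<longleftrightarrow>
      (\<forall>w\<in>K. \<forall>x\<in>U. \<forall>h. x + h \<in> U \<longrightarrow> g (x + h) \<bullet> w \<le> g x \<bullet> w + blinfun_apply (H x) h \<bullet> w)"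
    by (simp only: concave_iff)
  also have "\<dots> \<longleftrightarrow>
      (\<forall>x\<in>U. \<forall>h. x + h \<in> U \<longrightarrow> blinfun_apply (H x) h - (g (x + h) - g x) \<in> dual_cone K)"
  proof -
    have "0 \<le> (blinfun_apply (H x) h - (g (x + h) - g x)) \<bullet> w \<longleftrightarrow>
        g (x + h) \<bullet> w \<le> g x \<bullet> w + blinfun_apply (H x) h \<bullet> w" for x h w
      by (auto simp: inner_diff_left)
    then show ?thesis
      unfolding dual_cone_def by blast
  qed
  finally show ?thesis .
qed

theorem mainTheorem15:
  fixes K :: "'a::euclidean_space set" and \<nu> :: real and F :: "'a \<Rightarrow> real"
    and g :: "'a \<Rightarrow> 'a" and H :: "'a \<Rightarrow> 'a \<Rightarrow>\<^sub>L 'a" and T :: "'a \<Rightarrow> 'a \<Rightarrow>\<^sub>L 'a \<Rightarrow>\<^sub>L 'a"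
  assumes "regular_cone K"
    and "normal_barrier K \<nu> F g H T"
  shows "(negative_curvature K T \<longleftrightarrow>
           (\<forall>x\<in>interior K. \<forall>h. - D3vec T x h \<in> dual_cone K)) \<and>
         ((\<forall>x\<in>interior K. \<forall>h. - D3vec T x h \<in> dual_cone K) \<longleftrightarrow>
           (\<forall>x\<in>interior K. \<forall>h. x + h \<in> interior K \<longrightarrow>
              blinfun_apply (H x) h - (g (x + h) - g x) \<in> dual_cone K))"
proof
  have C3: "C3_on (interior K) F g H T"
    using assms(2) by (simp add: normal_barrier_def self_concordant_barrier_def)
  show "negative_curvature K T \<longleftrightarrow> (\<forall>x\<in>interior K. \<forall>h. - D3vec T x h \<in> dual_cone K)"
    using C3_on_D3_symmetric[OF C3 open_interior] by (rule negative_curvature_iff_D3vec_dual_cone)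
  have "convex (interior K)"
    using assms(1) by (simp add: regular_cone_def convex_interior)
  with C3 show "(\<forall>x\<in>interior K. \<forall>h. - D3vec T x h \<in> dual_cone K) \<longleftrightarrow>
      (\<forall>x\<in>interior K. \<forall>h. x + h \<in> interior K \<longrightarrow>
         blinfun_apply (H x) h - (g (x + h) - g x) \<in> dual_cone K)"
    by (intro D3vec_dual_cone_iff_gradient_increment_dual_cone open_interior) (auto simp: C3_on_def)
qed

end
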